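(* Let $p\in R_{\delta+\omega}$. (i) Each $p_{n,\alpha}$ is determined by finitely many variables $x_{l,k}$ with $l<n$. (ii) Each $x_{n,m}$ is determined by finitely many terms $p_{l,k}$ with $l>n$ and $k\in\omega$. More generally, for every ordinal $\beta<\delta$ and every $n\in\omega$ and $\alpha$ with $\beta+\omega\le\alpha<\delta+\omega$, there are $r\in\omega$ and $(l_i,\zeta_i)_{i<r}$ with $l_i>n$ and $\beta<\zeta_i<\beta+\omega$ such that for all assignments $a,b$: if $p_{n,\alpha}\circ a\ne p_{n,\alpha}\circ b$ then $(p_{l_i,\zeta_i}\circ a)_{i<r}\ne(p_{l_i,\zeta_i}\circ b)_{i<r}$.
   Context: Throughout, $\delta$ denotes a nonzero countable limit ordinal. Terms: variables are $x_{l,k}$ ($l,k\in\omega$), each taking values in $\{0,1\}$. A term $t$ is given by a finite sequence of variables $(v_0,\dots,v_{r-1})$ and a function $F:2^r\to2$; a variable $v$ is identified with the term $((v),\mathrm{id})$. An assignment $a$ maps variables to $\{0,1\}$ and extends to terms by $t\circ a=F(v_0\circ a,\dots,v_{r-1}\circ a)$. Terms are identified modulo $t=^*s$ iff $t\circ a=s\circ a$ for all assignments $a$. A term depends only on variables in $Y$ if it is $=^*$ to a term using only variables from $Y$. A term or variable $s$ is determined by terms $t_0,\dots,t_n$ if for all assignments $a,b$, $(t_i\circ a)_{i\le n}=(t_i\circ b)_{i\le n}$ implies $s\circ a=s\circ b$. The forcing $\tilde P$: a condition $\tilde p$ has height $\mathrm{ht}(\tilde p)<\omega_1$ and consists of,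 for every limit $\delta<\mathrm{ht}(\tilde p)$ and $n,m,k\in\omega$: a cofinal $\nu_{\delta,n,m}\subseteq\delta$ of order type $\omega$, with $\nu_{\delta,n,m_1}\cap\nu_{\delta,n,m_2}=\emptyset$ for $m_1\ne m_2$; a strictly increasing $j_{\delta,n,m}:\omega\to\omega$; and a surjective $f_{\delta,n,m,k}:2^{[j_{\delta,n,m}(k),\,j_{\delta,n,m}(k+1)-1]}\to2$; ordered by extension. For $\eta$ into $2$ with domain containing $\nu_{\delta,n,m}$, with $\zeta_i$ the $i$-th element of $\nu_{\delta,n,m}$, $g_{\delta,n,m,k}(\eta)=f_{\delta,n,m,k}((\eta(\zeta_i))_{j_{\delta,n,m}(k)\le i<j_{\delta,n,m}(k+1)})$. A function $\eta'$ with $\delta+m$ in its domain and $\eta$ cohere at $\delta+m$ above $k_0$ (with respect to level $n$) if $\eta'(\delta+m)=g_{\delta,n,m,k}(\eta)$ for all $k\ge k_0$. The set $R$: $R=\bigcup_{\delta<\omega_1}R_{\delta+\omega}$, where $p\in R_{\delta+\omega}$ consists of $\tilde p\in\tilde P$ with $\mathrm{ht}(\tilde p)=\delta+1$ and terms $\bar p=(p_{n,\alpha})_{n\in\omega,\alpha<\delta+\omega}$ such that $p_{n,\delta+m}=x_{n,m}$; for $\alpha<\delta$, $p_{n,\alpha}$ depends only on variables $x_{l,k}$ with $l<n$; and for all $n,m\in\omega$ and all limit $\alpha\le\delta$ there is $k_0$ such that for every assignment $a$, $p_{n,\alpha+m}\circ a=g_{\alpha,n,m,k}((p_{n+1,\zeta}\circ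 a)_{\zeta<\alpha})$ for all $k\ge k_0$ (computed from $\tilde p$). Conditions $p,q$ are identified if $\tilde p=\tilde q$ and $p_{n,\alpha}=^*q_{n,\alpha}$ for all $n,\alpha$. *)

theory Defs
  imports Main "HOL-Library.Infinite_Set" "HOL-Library.Countable_Set"
begin

section \<open>Ordinals, modelled as elements of a well-ordered type without maximum\<close>

definition ozero :: "'o::{wellorder,no_top}" where
  "ozero = (LEAST x. True)"

definition osucc :: "'o::{wellorder,no_top} \<Rightarrow> 'o" where
  "osucc x = (LEAST y. x < y)"

definition oadd :: "'o::{wellorder,no_top} \<Rightarrow> nat \<Rightarrow> 'o" where
  "oadd x m = (osucc ^^ m) x"

definition olimit :: "'o::{wellorder,no_top} \<Rightarrow> bool" where
  "olimit x \<longleftrightarrow> (\<exists>y. y < x) \<and> (\<forall>y. y < x \<longrightarrow> osucc y < x)"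

definition ofin :: "nat \<Rightarrow> 'o::{wellorder,no_top}" where
  "ofin k = oadd ozero k"

text \<open>S is a cofinal subset of gamma of order type omega\<close>
definition cofinal_omega :: "'o::{wellorder,no_top} set \<Rightarrow> 'o \<Rightarrow> bool" where
  "cofinal_omega S \<gamma> \<longleftrightarrow> S \<subseteq> {x. x < \<gamma>} \<and> (\<forall>y. y < \<gamma> \<longrightarrow> (\<exists>x\<in>S. y < x))
     \<and> infinite S \<and> (\<forall>x\<in>S. finite {y\<in>S. y < x})"

text \<open>A term: a finite sequence of variables x_{l,k} (encoded as pairs (l,k)) and a
  boolean function on lists (of the length of the variable sequence).\<close>
type_synonym vterm = "(nat \<times> nat) list \<times> (bool list \<Rightarrow> bool)"
type_synonym assignment = "nat \<times> nat \<Rightarrow> bool"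

definition teval :: "vterm \<Rightarrow> assignment \<Rightarrow> bool" where
  "teval t a = snd t (map a (fst t))"

definition tvar :: "nat \<times> nat \<Rightarrow> vterm" where
  "tvar v = ([v], hd)"

definition teq :: "vterm \<Rightarrow> vterm \<Rightarrow> bool" where
  "teq t s \<longleftrightarrow> (\<forall>a. teval t a = teval s a)"

definition depends_only :: "vterm \<Rightarrow> (nat \<times> nat) set \<Rightarrow> bool" where
  "depends_only t Y \<longleftrightarrow> (\<exists>s. set (fst s) \<subseteq> Y \<and> teq t s)"

definition determined_by :: "vterm \<Rightarrow> vterm list \<Rightarrow> bool" where
  "determined_by s ts \<longleftrightarrow>
     (\<forall>a b. map (\<lambda>t. teval t a) ts = map (\<lambda>t. teval t b) ts \<longrightarrow> teval s a = teval s b)"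

text \<open>Data of a condition p-tilde: nu gamma n m, j gamma n m, f gamma n m k
  (f as a function on bool lists of length j(k+1) - j(k), the list indexed by
   i = j(k), ..., j(k+1)-1).\<close>

definition gfun ::
  "('o::{wellorder,no_top} \<Rightarrow> nat \<Rightarrow> nat \<Rightarrow> 'o set) \<Rightarrow> ('o \<Rightarrow> nat \<Rightarrow> nat \<Rightarrow> nat \<Rightarrow> nat)
   \<Rightarrow> ('o \<Rightarrow> nat \<Rightarrow> nat \<Rightarrow> nat \<Rightarrow> bool list \<Rightarrow> bool)
   \<Rightarrow> 'o \<Rightarrow> nat \<Rightarrow> nat \<Rightarrow> nat \<Rightarrow> ('o \<Rightarrow> bool) \<Rightarrow> bool" where
  "gfun \<nu> j f \<gamma> n m k \<eta> =
     f \<gamma> n m k (map (\<lambda>i. \<eta> (enumerate (\<nu> \<gamma> n m) i)) [j \<gamma> n m k ..< j \<gamma> n m (Suc k)])"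

text \<open>p-tilde of height delta+1: data for every limit gamma \<le> delta.\<close>
definition tP_height_succ ::
  "'o::{wellorder,no_top} \<Rightarrow> ('o \<Rightarrow> nat \<Rightarrow> nat \<Rightarrow> 'o set) \<Rightarrow> ('o \<Rightarrow> nat \<Rightarrow> nat \<Rightarrow> nat \<Rightarrow> nat)
   \<Rightarrow> ('o \<Rightarrow> nat \<Rightarrow> nat \<Rightarrow> nat \<Rightarrow> bool list \<Rightarrow> bool) \<Rightarrow> bool" where
  "tP_height_succ \<delta> \<nu> j f \<longleftrightarrow>
    (\<forall>\<gamma>. olimit \<gamma> \<and> \<gamma> \<le> \<delta> \<longrightarrow>
       (\<forall>n m. cofinal_omega (\<nu> \<gamma> n m) \<gamma>)
     \<and> (\<forall>n m1 m2. m1 \<noteq> m2 \<longrightarrow> \<nu> \<gamma> n m1 \<inter> \<nu> \<gamma> n m2 = {})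
     \<and> (\<forall>n m. strict_mono (j \<gamma> n m))
     \<and> (\<forall>n m k b. \<exists>w. length w = j \<gamma> n m (Suc k) - j \<gamma> n m k \<and> f \<gamma> n m k w = b))"

text \<open>p = (p-tilde, p-bar) belongs to R_{delta+omega}; p-bar is given by p n alpha
  (only values with alpha < delta + omega are relevant).\<close>
definition in_R ::
  "'o::{wellorder,no_top} \<Rightarrow> ('o \<Rightarrow> nat \<Rightarrow> nat \<Rightarrow> 'o set) \<Rightarrow> ('o \<Rightarrow> nat \<Rightarrow> nat \<Rightarrow> nat \<Rightarrow> nat)
   \<Rightarrow> ('o \<Rightarrow> nat \<Rightarrow> nat \<Rightarrow> nat \<Rightarrow> bool list \<Rightarrow> bool) \<Rightarrow> (nat \<Rightarrow> 'o \<Rightarrow> vterm) \<Rightarrow> bool" where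
  "in_R \<delta> \<nu> j f p \<longleftrightarrow>
     tP_height_succ \<delta> \<nu> j f
   \<and> (\<forall>n m. teq (p n (oadd \<delta> m)) (tvar (n, m)))
   \<and> (\<forall>n \<alpha>. \<alpha> < \<delta> \<longrightarrow> depends_only (p n \<alpha>) {(l, k). l < n})
   \<and> (\<forall>n m \<gamma>. olimit \<gamma> \<and> \<gamma> \<le> \<delta> \<longrightarrow>
        (\<exists>k0. \<forall>a k. k0 \<le> k \<longrightarrow>
           teval (p n (oadd \<gamma> m)) a = gfun \<nu> j f \<gamma> n m k (\<lambda>\<zeta>. teval (p (Suc n) \<zeta>) a)))"

end

theory Submission
  imports Defs
begin

(* Since alpha >= beta + omega, write alpha = gamma + m with gamma a limit above beta. The
   coherence condition of R at gamma makes p n alpha a function of the block of terms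
   p (n+1) zeta, zeta the i-th element of nu gamma n m with j(k) <= i < j(k+1), for every large k;
   choosing k large puts all these zeta into any prescribed tail of gamma. By induction on alpha,
   each p (n+1) zeta with beta + omega <= zeta < gamma is determined by finitely many terms of
   level > n+1 indexed in (beta, beta + omega); if gamma = beta + omega, the zeta in a tail
   already lie in that interval. Part (ii) is the case beta = 0, alpha = delta + m, because
   p n (delta + m) = x n m, and part (i) is the depends-only clause of R. *)

lemma osucc_gt: "(x::'o::{wellorder,no_top}) < osucc x"
  unfolding osucc_def by (rule LeastI_ex) (rule gt_ex)

lemma osucc_le: "(x::'o::{wellorder,no_top}) < y \<Longrightarrow> osucc x \<le> y"
  unfolding osucc_def by (rule Least_le)

lemma ozero_le: "ozero \<le> (x::'o::{wellorder,no_top})"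
  unfolding ozero_def by (rule Least_le) (rule TrueI)

lemma oadd_0 [simp]: "oadd x 0 = x"
  by (simp add: oadd_def)

lemma oadd_Suc [simp]: "oadd x (Suc m) = osucc (oadd x m)"
  by (simp add: oadd_def)

lemma oadd_ge: "(x::'o::{wellorder,no_top}) \<le> oadd x m"
  by (induction m) (auto intro: order.trans less_imp_le[OF osucc_gt])

lemma oadd_less_limit: "olimit (\<gamma>::'o::{wellorder,no_top}) \<Longrightarrow> x < \<gamma> \<Longrightarrow> oadd x m < \<gamma>"
  by (induction m) (auto simp: olimit_def)

lemma le_oadd_imp_eq_oadd:
  fixes \<beta> \<zeta> :: "'o::{wellorder,no_top}"
  assumes "\<beta> \<le> \<zeta>" and "\<zeta> \<le> oadd \<beta> m"
  shows "\<exists>m'. \<zeta> = oadd \<beta> m'"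
  using assms(2)
proof (induction m)
  case 0
  then show ?case using assms(1) by (metis antisym oadd_0)
next
  case (Suc m)
  show ?case
  proof (cases "\<zeta> \<le> oadd \<beta> m")
    case True
    then show ?thesis by (rule Suc.IH)
  next
    case False
    then have "osucc (oadd \<beta> m) \<le> \<zeta>" by (intro osucc_le) simp
    then show ?thesis using Suc.prems by (metis antisym oadd_Suc)
  qed
qed

lemma oadd_limit_decomposition:
  fixes \<alpha> \<beta> :: "'o::{wellorder,no_top}"
  assumes "\<forall>m. oadd \<beta> m < \<alpha>"
  obtains \<gamma> m where "olimit \<gamma>" "\<beta> < \<gamma>" "\<alpha> = oadd \<gamma> m"
  using assms
proof (induction \<alpha> arbitrary: thesis rule: less_induct)
  case (less \<alpha>)
  have "\<beta> < \<alpha>" using less.prems(2)[rule_format, of 0] by simp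
  show ?case
  proof (cases "olimit \<alpha>")
    case True
    then show ?thesis using less.prems(1) \<open>\<beta> < \<alpha>\<close> by (metis oadd_0)
  next
    case False
    with \<open>\<beta> < \<alpha>\<close> obtain y where "y < \<alpha>" "\<not> osucc y < \<alpha>" unfolding olimit_def by blast
    then have \<alpha>_eq: "\<alpha> = osucc y" using osucc_le by (metis antisym not_less)
    have "oadd \<beta> m < y" for m
    proof (rule ccontr)
      assume "\<not> oadd \<beta> m < y"
      then have "y < osucc (oadd \<beta> m)" using osucc_gt by (metis le_less_trans not_less)
      then have "\<alpha> \<le> oadd \<beta> (Suc m)" using \<alpha>_eq osucc_le by simp
      then show False using less.prems(2)[rule_format, of "Suc m"] by simp
    qed
    then obtain \<gamma> m where "olimit \<gamma>" "\<beta> < \<gamma>" "y = oadd \<gamma> m"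
      using less.IH[OF \<open>y < \<alpha>\<close>] by blast
    then show ?thesis using less.prems(1) \<alpha>_eq by (metis oadd_Suc)
  qed
qed

lemma cofinal_omega_enumerate_eventually_gt:
  fixes S :: "'o::{wellorder,no_top} set"
  assumes "cofinal_omega S \<gamma>" and "z < \<gamma>"
  obtains i0 where "\<And>i. i0 \<le> i \<Longrightarrow> z < enumerate S i"
proof -
  have inf: "infinite S" using assms(1) by (simp add: cofinal_omega_def)
  obtain x where x: "x \<in> S" "z < x" using assms unfolding cofinal_omega_def by blast
  have "finite {y\<in>S. y < x}" using assms(1) x(1) unfolding cofinal_omega_def by blast
  then have "finite (enumerate S -` {y\<in>S. y < x})"
    using inj_enumerate[OF inf] by (rule finite_vimageI)
  moreover have "{i. enumerate S i \<le> z} \<subseteq> enumerate S -` {y\<in>S. y < x}"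
    using x(2) enumerate_in_set[OF inf] by fastforce
  ultimately have "finite {i. enumerate S i \<le> z}" by (rule finite_subset[rotated])
  then obtain i0 where "{i. enumerate S i \<le> z} \<subseteq> {..<i0}" using finite_nat_bounded by blast
  then show ?thesis using that by (force simp: not_le[symmetric])
qed

definition finitely_determined :: "vterm \<Rightarrow> ('i \<Rightarrow> vterm) \<Rightarrow> 'i set \<Rightarrow> bool" where
  "finitely_determined s P A \<longleftrightarrow> (\<exists>zs. set zs \<subseteq> A \<and> determined_by s (map P zs))"

lemma determined_by_trans:
  assumes "determined_by s ts" and "\<forall>t\<in>set ts. determined_by t us"
  shows "determined_by s us"
  unfolding determined_by_def
proof (intro allI impI)
  fix a b
  assume "map (\<lambda>u. teval u a) us = map (\<lambda>u. teval u b) us"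
  then have "map (\<lambda>t. teval t a) ts = map (\<lambda>t. teval t b) ts"
    using assms(2) unfolding determined_by_def map_eq_conv by blast
  then show "teval s a = teval s b" using assms(1) unfolding determined_by_def by blast
qed

lemma determined_by_mono:
  assumes "determined_by s ts" and "set ts \<subseteq> set us"
  shows "determined_by s us"
  using assms unfolding determined_by_def map_eq_conv by blast

lemma teq_determined_by: "teq s t \<Longrightarrow> determined_by t [s]"
  by (simp add: teq_def determined_by_def)

lemma finitely_determined_self: "x \<in> A \<Longrightarrow> finitely_determined (P x) P A"
  unfolding finitely_determined_def determined_by_def by (intro exI[of _ "[x]"]) simp

lemma finitely_determined_mono:
  "finitely_determined s P A \<Longrightarrow> A \<subseteq> B \<Longrightarrow> finitely_determined s P B"
  unfolding finitely_determined_def by blast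

lemma finitely_determined_trans:
  assumes "determined_by s ts" and "\<forall>t\<in>set ts. finitely_determined t P A"
  shows "finitely_determined s P A"
proof -
  have "\<exists>Z. \<forall>t\<in>set ts. set (Z t) \<subseteq> A \<and> determined_by t (map P (Z t))"
    using assms(2) unfolding finitely_determined_def by (rule bchoice)
  then obtain Z where Z: "\<forall>t\<in>set ts. set (Z t) \<subseteq> A \<and> determined_by t (map P (Z t))" ..
  let ?zs = "concat (map Z ts)"
  have "\<forall>t\<in>set ts. determined_by t (map P ?zs)"
  proof
    fix t
    assume "t \<in> set ts"
    then have "determined_by t (map P (Z t))" and "set (map P (Z t)) \<subseteq> set (map P ?zs)"
      using Z by auto
    then show "determined_by t (map P ?zs)" by (rule determined_by_mono)
  qed
  then have "determined_by s (map P ?zs)" by (rule determined_by_trans[OF assms(1)])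
  moreover have "set ?zs \<subseteq> A" using Z by auto
  ultimately show ?thesis unfolding finitely_determined_def by blast
qed

lemma finitely_determined_reindex:
  assumes "finitely_determined s P A" and "\<forall>x\<in>A. \<exists>y\<in>B. P x = Q y"
  shows "finitely_determined s Q B"
proof -
  obtain zs where "set zs \<subseteq> A" and det: "determined_by s (map P zs)"
    using assms(1) unfolding finitely_determined_def by blast
  have "finitely_determined t Q B" if t: "t \<in> set (map P zs)" for t
  proof -
    obtain y where "y \<in> B" "t = Q y" using t \<open>set zs \<subseteq> A\<close> assms(2) by auto
    then show ?thesis by (simp add: finitely_determined_self)
  qed
  then show ?thesis using finitely_determined_trans[OF det] by blast
qed

lemma depends_only_finitely_determined:
  assumes "depends_only t Y"
  shows "finitely_determined t tvar Y"
proof -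
  obtain s where "set (fst s) \<subseteq> Y" "teq t s" using assms unfolding depends_only_def by blast
  moreover have "determined_by t (map tvar (fst s))"
    unfolding determined_by_def
  proof (intro allI impI)
    fix a b
    assume "map (\<lambda>u. teval u a) (map tvar (fst s)) = map (\<lambda>u. teval u b) (map tvar (fst s))"
    then have "map a (fst s) = map b (fst s)" by (simp add: teval_def tvar_def comp_def)
    then have "teval s a = teval s b" unfolding teval_def by (rule arg_cong)
    then show "teval t a = teval t b" using \<open>teq t s\<close> by (simp add: teq_def)
  qed
  ultimately show ?thesis unfolding finitely_determined_def by blast
qed

lemma finitely_determined_separating:
  "finitely_determined s P A \<longleftrightarrow>
     (\<exists>zs. set zs \<subseteq> A \<and> (\<forall>a b. teval s a \<noteq> teval s b \<longrightarrow>
        map (\<lambda>x. teval (P x) a) zs \<noteq> map (\<lambda>x. teval (P x) b) zs))"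
  unfolding finitely_determined_def determined_by_def map_map comp_def by blast

lemma determined_by_gfun_block:
  assumes "\<forall>a. teval s a = gfun \<nu> j f \<gamma> n m k (\<lambda>\<zeta>. teval (P \<zeta>) a)"
  shows "determined_by s (map (\<lambda>i. P (enumerate (\<nu> \<gamma> n m) i)) [j \<gamma> n m k ..< j \<gamma> n m (Suc k)])"
  using assms unfolding determined_by_def gfun_def map_map comp_def by metis

lemma in_R_limit_data:
  assumes "in_R \<delta> \<nu> j f p" and "olimit \<gamma>" and "\<gamma> \<le> \<delta>"
  shows "cofinal_omega (\<nu> \<gamma> n m) \<gamma>" and "strict_mono (j \<gamma> n m)"
    and "\<exists>k0. \<forall>a k. k0 \<le> k \<longrightarrow>
           teval (p n (oadd \<gamma> m)) a = gfun \<nu> j f \<gamma> n m k (\<lambda>\<zeta>. teval (p (Suc n) \<zeta>) a)"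
  using assms by (simp_all add: in_R_def tP_height_succ_def)

lemma in_R_limit_step:
  assumes R: "in_R \<delta> \<nu> j f p" and \<gamma>: "olimit \<gamma>" "\<gamma> \<le> \<delta>" and "z < \<gamma>"
    and tail: "\<And>\<zeta>. z < \<zeta> \<Longrightarrow> \<zeta> < \<gamma> \<Longrightarrow> finitely_determined (p (Suc n) \<zeta>) P A"
  shows "finitely_determined (p n (oadd \<gamma> m)) P A"
proof -
  obtain k0 where k0: "\<forall>a k. k0 \<le> k \<longrightarrow>
      teval (p n (oadd \<gamma> m)) a = gfun \<nu> j f \<gamma> n m k (\<lambda>\<zeta>. teval (p (Suc n) \<zeta>) a)"
    using in_R_limit_data(3)[OF R \<gamma>] by blast
  note cof = in_R_limit_data(1)[OF R \<gamma>, where n = n and m = m]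
    and mono = in_R_limit_data(2)[OF R \<gamma>, where n = n and m = m]
  obtain i0 where i0: "\<And>i. i0 \<le> i \<Longrightarrow> z < enumerate (\<nu> \<gamma> n m) i"
    using cofinal_omega_enumerate_eventually_gt[OF cof \<open>z < \<gamma>\<close>] by blast
  define k where "k = max k0 i0"
  have det: "determined_by (p n (oadd \<gamma> m))
      (map (\<lambda>i. p (Suc n) (enumerate (\<nu> \<gamma> n m) i)) [j \<gamma> n m k ..< j \<gamma> n m (Suc k)])"
    using k0 by (intro determined_by_gfun_block[where f = f]) (simp add: k_def)
  have tail_block: "finitely_determined (p (Suc n) (enumerate (\<nu> \<gamma> n m) i)) P A"
    if "j \<gamma> n m k \<le> i" for i
  proof (rule tail)
    have "k \<le> i" using that strict_mono_imp_increasing[OF mono, of k] by simp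
    then show "z < enumerate (\<nu> \<gamma> n m) i" using i0 by (simp add: k_def)
    have "infinite (\<nu> \<gamma> n m)" using cof by (simp add: cofinal_omega_def)
    then show "enumerate (\<nu> \<gamma> n m) i < \<gamma>"
      using enumerate_in_set cof unfolding cofinal_omega_def by blast
  qed
  show ?thesis by (rule finitely_determined_trans[OF det]) (auto intro: tail_block)
qed

lemma in_R_finitely_determined_by_higher_levels:
  fixes \<delta> :: "'o::{wellorder,no_top}"
  assumes R: "in_R \<delta> \<nu> j f p" and "\<forall>m. oadd \<beta> m < \<alpha>" and "\<alpha> < oadd \<delta> m0"
  shows "finitely_determined (p n \<alpha>) (\<lambda>(l, \<zeta>). p l \<zeta>)
           {(l, \<zeta>). n < l \<and> \<beta> < \<zeta> \<and> (\<exists>m. \<zeta> = oadd \<beta> m)}"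
  using assms(2,3)
proof (induction \<alpha> arbitrary: n rule: less_induct)
  case (less \<alpha> n)
  let ?A = "\<lambda>n. {(l, \<zeta>). n < l \<and> \<beta> < \<zeta> \<and> (\<exists>m. \<zeta> = oadd \<beta> m)}"
  obtain \<gamma> m where \<gamma>: "olimit \<gamma>" "\<beta> < \<gamma>" "\<alpha> = oadd \<gamma> m"
    using oadd_limit_decomposition[OF less.prems(1)] .
  have "\<gamma> \<le> \<alpha>" using \<gamma>(3) oadd_ge by simp
  have "\<gamma> \<le> \<delta>"
  proof (rule ccontr)
    assume "\<not> \<gamma> \<le> \<delta>"
    then have "oadd \<delta> m0 < \<gamma>" using oadd_less_limit[OF \<gamma>(1)] by simp
    then show False using less.prems(2) \<open>\<gamma> \<le> \<alpha>\<close> by simp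
  qed
  have "\<exists>z<\<gamma>. \<forall>\<zeta>. z < \<zeta> \<longrightarrow> \<zeta> < \<gamma> \<longrightarrow> finitely_determined (p (Suc n) \<zeta>) (\<lambda>(l, \<zeta>). p l \<zeta>) (?A n)"
  proof (cases "\<exists>z<\<gamma>. \<forall>m. oadd \<beta> m < z")
    case True
    then obtain z where z: "z < \<gamma>" "\<forall>m. oadd \<beta> m < z" by blast
    have "finitely_determined (p (Suc n) \<zeta>) (\<lambda>(l, \<zeta>). p l \<zeta>) (?A n)"
      if "z < \<zeta>" "\<zeta> < \<gamma>" for \<zeta>
    proof (rule finitely_determined_mono)
      have "\<zeta> < \<alpha>" and "\<zeta> < oadd \<delta> m0"
        using that(2) \<open>\<gamma> \<le> \<alpha>\<close> less.prems(2) by simp_all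
      moreover have "\<forall>m. oadd \<beta> m < \<zeta>" using z(2) that(1) by (blast intro: less_trans)
      ultimately show "finitely_determined (p (Suc n) \<zeta>) (\<lambda>(l, \<zeta>). p l \<zeta>) (?A (Suc n))"
        using less.IH by blast
    qed auto
    then show ?thesis using z(1) by blast
  next
    case False
    txt \<open>Then \<open>\<gamma> = \<beta> + \<omega>\<close>, so the terms \<open>p (Suc n) \<zeta>\<close> with \<open>\<beta> < \<zeta> < \<gamma>\<close> are themselves allowed.\<close>
    have "finitely_determined (p (Suc n) \<zeta>) (\<lambda>(l, \<zeta>). p l \<zeta>) (?A n)"
      if \<zeta>: "\<beta> < \<zeta>" "\<zeta> < \<gamma>" for \<zeta>
    proof -
      obtain m' where "\<zeta> \<le> oadd \<beta> m'" using False \<zeta>(2) by (meson not_less)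
      then have "\<exists>m. \<zeta> = oadd \<beta> m" using \<zeta>(1) by (blast intro: le_oadd_imp_eq_oadd less_imp_le)
      then have "(Suc n, \<zeta>) \<in> ?A n" using \<zeta>(1) by auto
      then have "finitely_determined ((\<lambda>(l, \<zeta>). p l \<zeta>) (Suc n, \<zeta>)) (\<lambda>(l, \<zeta>). p l \<zeta>) (?A n)"
        by (rule finitely_determined_self)
      then show ?thesis by simp
    qed
    then show ?thesis using \<gamma>(2) by blast
  qed
  then obtain z where "z < \<gamma>"
    and "\<And>\<zeta>. z < \<zeta> \<Longrightarrow> \<zeta> < \<gamma> \<Longrightarrow> finitely_determined (p (Suc n) \<zeta>) (\<lambda>(l, \<zeta>). p l \<zeta>) (?A n)"
    by blast
  then show ?case unfolding \<gamma>(3) by (rule in_R_limit_step[OF R \<gamma>(1) \<open>\<gamma> \<le> \<delta>\<close>])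
qed

lemma in_R_finitely_determined_by_lower_variables:
  assumes "in_R \<delta> \<nu> j f p" and "\<alpha> < \<delta>"
  shows "finitely_determined (p n \<alpha>) tvar {(l, k). l < n}"
  using assms unfolding in_R_def by (blast intro: depends_only_finitely_determined)

lemma in_R_variable_finitely_determined_by_higher_levels:
  fixes \<delta> :: "'o::{wellorder,no_top}"
  assumes R: "in_R \<delta> \<nu> j f p" and "olimit \<delta>"
  shows "finitely_determined (tvar (n, m)) (\<lambda>(l, k). p l (ofin k)) {(l, k). n < l}"
proof -
  have "ozero < \<delta>" using \<open>olimit \<delta>\<close> ozero_le unfolding olimit_def by (metis le_less_trans)
  then have "\<forall>k. oadd ozero k < oadd \<delta> m"
    using oadd_less_limit[OF \<open>olimit \<delta>\<close>] oadd_ge by (blast intro: less_le_trans)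
  moreover have "oadd \<delta> m < oadd \<delta> (Suc m)" by (simp add: osucc_gt)
  ultimately have "finitely_determined (p n (oadd \<delta> m)) (\<lambda>(l, \<zeta>). p l \<zeta>)
      {(l, \<zeta>). n < l \<and> ozero < \<zeta> \<and> (\<exists>k. \<zeta> = oadd ozero k)}"
    by (rule in_R_finitely_determined_by_higher_levels[OF R])
  moreover have "determined_by (tvar (n, m)) [p n (oadd \<delta> m)]"
    using R unfolding in_R_def by (blast intro: teq_determined_by)
  ultimately have "finitely_determined (tvar (n, m)) (\<lambda>(l, \<zeta>). p l \<zeta>)
      {(l, \<zeta>). n < l \<and> ozero < \<zeta> \<and> (\<exists>k. \<zeta> = oadd ozero k)}"
    by (auto intro: finitely_determined_trans)
  then show ?thesis by (rule finitely_determined_reindex) (auto simp: ofin_def)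
qed

theorem mainTheorem10:
  fixes \<delta> :: "'o::{wellorder,no_top}"
    and \<nu> :: "'o \<Rightarrow> nat \<Rightarrow> nat \<Rightarrow> 'o set"
    and j :: "'o \<Rightarrow> nat \<Rightarrow> nat \<Rightarrow> nat \<Rightarrow> nat"
    and f :: "'o \<Rightarrow> nat \<Rightarrow> nat \<Rightarrow> nat \<Rightarrow> bool list \<Rightarrow> bool"
    and p :: "nat \<Rightarrow> 'o \<Rightarrow> vterm"
  assumes "olimit \<delta>"
    and "countable {x. x < \<delta>}"
    and "in_R \<delta> \<nu> j f p"
  shows "(\<forall>n \<alpha>. \<alpha> < \<delta> \<longrightarrow>
            (\<exists>vs. (\<forall>(l, k)\<in>set vs. l < n) \<and> determined_by (p n \<alpha>) (map tvar vs)))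
       \<and> (\<forall>n m. \<exists>zs. (\<forall>(l, k)\<in>set zs. n < l)
            \<and> determined_by (tvar (n, m)) (map (\<lambda>(l, k). p l (ofin k)) zs))
       \<and> (\<forall>\<beta> n \<alpha>. \<beta> < \<delta> \<and> (\<forall>m. oadd \<beta> m < \<alpha>) \<and> (\<exists>m. \<alpha> < oadd \<delta> m) \<longrightarrow>
            (\<exists>zs. (\<forall>(l, \<zeta>)\<in>set zs. n < l \<and> \<beta> < \<zeta> \<and> (\<exists>m. \<zeta> = oadd \<beta> m))
               \<and> (\<forall>a b. teval (p n \<alpha>) a \<noteq> teval (p n \<alpha>) b \<longrightarrow>
                    map (\<lambda>(l, \<zeta>). teval (p l \<zeta>) a) zs \<noteq> map (\<lambda>(l, \<zeta>). teval (p l \<zeta>) b) zs)))"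
proof (intro conjI allI impI)
  fix n \<alpha>
  assume "\<alpha> < \<delta>"
  then show "\<exists>vs. (\<forall>(l, k)\<in>set vs. l < n) \<and> determined_by (p n \<alpha>) (map tvar vs)"
    using in_R_finitely_determined_by_lower_variables[OF assms(3)]
    unfolding finitely_determined_def by fast
next
  fix n m
  show "\<exists>zs. (\<forall>(l, k)\<in>set zs. n < l) \<and> determined_by (tvar (n, m)) (map (\<lambda>(l, k). p l (ofin k)) zs)"
    using in_R_variable_finitely_determined_by_higher_levels[OF assms(3,1)]
    unfolding finitely_determined_def by fast
next
  fix \<beta> n \<alpha>
  assume "\<beta> < \<delta> \<and> (\<forall>m. oadd \<beta> m < \<alpha>) \<and> (\<exists>m. \<alpha> < oadd \<delta> m)"
  then show "\<exists>zs. (\<forall>(l, \<zeta>)\<in>set zs. n < l \<and> \<beta> < \<zeta> \<and> (\<exists>m. \<zeta> = oadd \<beta> m))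
      \<and> (\<forall>a b. teval (p n \<alpha>) a \<noteq> teval (p n \<alpha>) b \<longrightarrow>
           map (\<lambda>(l, \<zeta>). teval (p l \<zeta>) a) zs \<noteq> map (\<lambda>(l, \<zeta>). teval (p l \<zeta>) b) zs)"
    using in_R_finitely_determined_by_higher_levels[OF assms(3), of \<beta> \<alpha> _ n]
    unfolding finitely_determined_separating split_def by fast
qed

end
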